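(* Let $\boldsymbol{\sigma}\in\mathcal{G}_{\mathcal{N}|\mathcal{R}}$ be an extremal assemblage. Then every bipartite state $\rho^{AB}\in\mathcal{S}_{\boldsymbol{\sigma}}$, on $\mathcal{H}_A\otimes\mathcal{H}_B$ with $\mathcal{H}_A$ of any finite dimension, satisfies $E_{\mathrm{F}}(\rho^{AB})=S(\rho_{\boldsymbol{\sigma}})$.
   Context: Fix finite sets $\mathcal{N}$ (outcomes) and $\mathcal{R}$ (inputs) and a finite-dimensional Hilbert space $\mathcal{H}_B$. An assemblage is a tuple $\boldsymbol{\sigma}=(\sigma_{n|r})_{n\in\mathcal{N},r\in\mathcal{R}}$ of positive semidefinite operators on $\mathcal{H}_B$ such that $\rho_{\boldsymbol{\sigma}}:=\sum_{n}\sigma_{n|r}$ is independent of $r$ and has trace $1$; $\rho_{\boldsymbol{\sigma}}$ is called the marginal of $\boldsymbol{\sigma}$. The set $\mathcal{G}_{\mathcal{N}|\mathcal{R}}$ of all such assemblages is convex (convex combinations taken entrywise). An assemblage is extremal if it cannot be written as $p\boldsymbol{\sigma}^1+(1-p)\boldsymbol{\sigma}^2$ with $0<p<1$ and $\boldsymbol{\sigma}^1\neq\boldsymbol{\sigma}^2$ in $\mathcal{G}_{\mathcal{N}|\mathcal{R}}$. A state $\rho^{AB}$ on $\mathcal{H}_A\otimes\mathcal{H}_B$ ($\mathcal{H}_A$ any finite-dimensional space) realizes $\boldsymbol{\sigma}$ if for each $r\in\mathcal{R}$ there is a POVM $\{M_{n|r}\}_{n\in\mathcal{N}}$ on $\mathcal{H}_A$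 ($M_{n|r}\ge 0$, $\sum_n M_{n|r}=\mathbb{I}$) with $\sigma_{n|r}=\mathrm{Tr}_A[(M_{n|r}\otimes\mathbb{I}^B)\rho^{AB}]$ for all $n,r$; $\mathcal{S}_{\boldsymbol{\sigma}}$ is the set of all states realizing $\boldsymbol{\sigma}$. $S(\rho)=-\mathrm{Tr}(\rho\log_2\rho)$ is the von Neumann entropy. The entanglement of formation of a bipartite state is $E_{\mathrm{F}}(\rho^{AB})=\inf\{\sum_i p^i S(\mathrm{Tr}_A|\phi^i\rangle\langle\phi^i|) : \sum_i p^i|\phi^i\rangle\langle\phi^i|=\rho^{AB},\ p^i\ge 0,\ \sum_i p^i=1\}$, the infimum being over finite decompositions into pure states. *)

theory Defs
  imports "HOL-Analysis.Analysis"
begin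

text \<open>Operators on a finite-dimensional Hilbert space with orthonormal basis indexed by
  a finite type 'i are complex matrices of type complex^'i^'i.\<close>

type_synonym 'i op = "complex^'i^'i"

definition adjoint :: "'i::finite op \<Rightarrow> 'i op" where
  "adjoint M = (\<chi> i j. cnj (M $ j $ i))"

definition hermitian :: "'i::finite op \<Rightarrow> bool" where
  "hermitian M \<longleftrightarrow> adjoint M = M"

definition psd :: "'i::finite op \<Rightarrow> bool" where
  "psd M \<longleftrightarrow> hermitian M \<and>
     (\<forall>v :: complex^'i. 0 \<le> Re (\<Sum>i\<in>UNIV. \<Sum>j\<in>UNIV. cnj (v $ i) * M $ i $ j * v $ j))"

definition density :: "'i::finite op \<Rightarrow> bool" where
  "density \<rho> \<longleftrightarrow> psd \<rho> \<and> trace \<rho> = 1"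

definition unitary :: "'i::finite op \<Rightarrow> bool" where
  "unitary U \<longleftrightarrow> adjoint U ** U = mat 1"

definition diag_op :: "('i::finite \<Rightarrow> real) \<Rightarrow> 'i op" where
  "diag_op l = (\<chi> i j. if i = j then complex_of_real (l i) else 0)"

text \<open>von Neumann entropy S(rho) = - Tr (rho log2 rho) = - sum of l log2 l over the
  eigenvalues l of rho (counted with multiplicity), computed from a spectral decomposition
  rho = U diag(l) U^dagger (convention 0 log 0 = 0, automatic here).\<close>
definition vn_entropy :: "'i::finite op \<Rightarrow> real" where
  "vn_entropy \<rho> = (SOME s. \<exists>U l. unitary U \<and> \<rho> = U ** diag_op l ** adjoint U \<and>
       s = - (\<Sum>i\<in>UNIV. l i * log 2 (l i)))"

definition kron :: "'a::finite op \<Rightarrow> 'b::finite op \<Rightarrow> ('a \<times> 'b) op" where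
  "kron A B = (\<chi> p q. A $ fst p $ fst q * B $ snd p $ snd q)"

definition ptrace_A :: "('a::finite \<times> 'b::finite) op \<Rightarrow> 'b op" where
  "ptrace_A M = (\<chi> b b'. \<Sum>a\<in>UNIV. M $ (a, b) $ (a, b'))"

definition proj :: "complex^'i::finite \<Rightarrow> 'i op" where
  "proj \<phi> = (\<chi> i j. \<phi> $ i * cnj (\<phi> $ j))"

definition unit_vec :: "complex^'i::finite \<Rightarrow> bool" where
  "unit_vec \<phi> \<longleftrightarrow> (\<Sum>i\<in>UNIV. cnj (\<phi> $ i) * \<phi> $ i) = 1"

definition ent_formation :: "('a::finite \<times> 'b::finite) op \<Rightarrow> real" where
  "ent_formation \<rho> = Inf {(\<Sum>i<k. p i * vn_entropy (ptrace_A (proj (\<phi> i)))) | (k::nat) (p::nat \<Rightarrow> real) (\<phi>::nat \<Rightarrow> complex^('a \<times> 'b)).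
       (\<forall>i<k. 0 \<le> p i \<and> unit_vec (\<phi> i)) \<and> (\<Sum>i<k. p i) = 1 \<and>
       (\<Sum>i<k. p i *\<^sub>R proj (\<phi> i)) = \<rho>}"

text \<open>Assemblages: outcomes 'n, inputs 'r (finite types), system B with basis 'b.\<close>
definition assemblage :: "('n::finite \<Rightarrow> 'r::finite \<Rightarrow> 'b::finite op) \<Rightarrow> bool" where
  "assemblage \<sigma> \<longleftrightarrow> (\<forall>n r. psd (\<sigma> n r)) \<and>
     (\<forall>r r'. (\<Sum>n\<in>UNIV. \<sigma> n r) = (\<Sum>n\<in>UNIV. \<sigma> n r')) \<and>
     (\<forall>r. trace (\<Sum>n\<in>UNIV. \<sigma> n r) = 1)"

definition marginal :: "('n::finite \<Rightarrow> 'r::finite \<Rightarrow> 'b::finite op) \<Rightarrow> 'b op" where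
  "marginal \<sigma> = (\<Sum>n\<in>UNIV. \<sigma> n (SOME r. True))"

definition extremal_assemblage :: "('n::finite \<Rightarrow> 'r::finite \<Rightarrow> 'b::finite op) \<Rightarrow> bool" where
  "extremal_assemblage \<sigma> \<longleftrightarrow> assemblage \<sigma> \<and>
     \<not> (\<exists>p \<sigma>1 \<sigma>2. 0 < p \<and> p < 1 \<and> assemblage \<sigma>1 \<and> assemblage \<sigma>2 \<and> \<sigma>1 \<noteq> \<sigma>2 \<and>
          (\<forall>n r. \<sigma> n r = p *\<^sub>R \<sigma>1 n r + (1 - p) *\<^sub>R \<sigma>2 n r))"

definition povm :: "('n::finite \<Rightarrow> 'a::finite op) \<Rightarrow> bool" where
  "povm M \<longleftrightarrow> (\<forall>n. psd (M n)) \<and> (\<Sum>n\<in>UNIV. M n) = mat 1"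

definition realizes :: "('a::finite \<times> 'b::finite) op \<Rightarrow> ('n::finite \<Rightarrow> 'r::finite \<Rightarrow> 'b op) \<Rightarrow> bool" where
  "realizes \<rho> \<sigma> \<longleftrightarrow> density \<rho> \<and>
     (\<forall>r. \<exists>M :: 'n \<Rightarrow> 'a op. povm M \<and>
        (\<forall>n. \<sigma> n r = ptrace_A (kron (M n) (mat 1) ** \<rho>)))"

end

theory Submission
  imports Defs
begin

(*
  Fix measurements M_r realizing \<sigma> from \<rho> and a pure-state decomposition
  \<rho> = \<Sum>_i p_i |\<phi>_i\<rangle>\<langle>\<phi>_i|. Applying the same measurements to each \<phi>_i steers an assemblage
  \<sigma>^i with marginal Tr_A |\<phi>_i\<rangle>\<langle>\<phi>_i|, and by linearity of the partial trace
  \<sigma> = \<Sum>_i p_i \<sigma>^i. Extremality of \<sigma> forces \<sigma>^i = \<sigma> whenever p_i > 0, so every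
  pure-state decomposition of \<rho> has all its reduced states equal to \<rho>_\<sigma> and average entropy
  S(\<rho>_\<sigma>). Pure-state decompositions exist (a psd matrix is a sum of rank-one projections,
  peeled off one column at a time), so the infimum defining E_F is S(\<rho>_\<sigma>).
*)

definition sesq_form :: "'i::finite op \<Rightarrow> complex^'i \<Rightarrow> complex^'i \<Rightarrow> complex" where
  "sesq_form M x y = (\<Sum>l\<in>UNIV. \<Sum>m\<in>UNIV. cnj (x $ l) * M $ l $ m * y $ m)"

definition quad_form :: "'i::finite op \<Rightarrow> complex^'i \<Rightarrow> complex" where
  "quad_form M x = sesq_form M x x"

lemma psd_iff_quad_form: "psd M \<longleftrightarrow> hermitian M \<and> (\<forall>x. 0 \<le> Re (quad_form M x))"
  by (simp add: psd_def quad_form_def sesq_form_def)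

lemma hermitian_iff_cnj: "hermitian M \<longleftrightarrow> (\<forall>i j. cnj (M $ j $ i) = M $ i $ j)"
  unfolding hermitian_def adjoint_def vec_eq_iff by auto

lemma scaleR_complex: "c *\<^sub>R (z :: complex) = of_real c * z"
  by (rule scaleR_conv_of_real)

lemma scaleR_matrix_nth: "(c *\<^sub>R A) $ i $ j = of_real c * (A $ i $ j :: complex)"
  by (simp add: scaleR_complex)

lemma quad_form_add: "quad_form (A + B) x = quad_form A x + quad_form B x"
  by (simp add: quad_form_def sesq_form_def algebra_simps sum.distrib)

lemma quad_form_diff: "quad_form (A - B) x = quad_form A x - quad_form B x"
  by (simp add: quad_form_def sesq_form_def algebra_simps sum_subtractf)

lemma quad_form_scaleR: "quad_form (c *\<^sub>R A) x = of_real c * quad_form A x"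
  by (simp add: quad_form_def sesq_form_def sum_distrib_left scaleR_matrix_nth algebra_simps scaleR_complex)

lemma quad_form_add_vector:
  "quad_form M (x + y) = quad_form M x + quad_form M y + sesq_form M x y + sesq_form M y x"
  by (simp add: quad_form_def sesq_form_def algebra_simps sum.distrib)

lemma sum_mult_axis: "(\<Sum>m\<in>UNIV. f m * axis i t $ m) = f i * (t :: complex)"
  by (simp add: axis_def if_distrib[where f = "\<lambda>x. _ * x"] cong: if_cong)

lemma sesq_form_altdef: "sesq_form M x y = (\<Sum>l\<in>UNIV. cnj (x $ l) * (\<Sum>m\<in>UNIV. M $ l $ m * y $ m))"
  by (simp add: sesq_form_def sum_distrib_left mult.assoc)

lemma sesq_form_axis_left: "sesq_form M (axis i s) y = cnj s * (\<Sum>m\<in>UNIV. M $ i $ m * y $ m)"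
  by (simp add: sesq_form_altdef axis_def if_distrib[where f = cnj]
      if_distrib[where f = "\<lambda>x. x * _"] cong: if_cong)

lemma sesq_form_axis_right: "sesq_form M x (axis j t) = (\<Sum>l\<in>UNIV. cnj (x $ l) * M $ l $ j) * t"
  by (simp add: sesq_form_def sum_mult_axis sum_distrib_right)

lemma sesq_form_axis_axis: "sesq_form M (axis i s) (axis j t) = cnj s * M $ i $ j * t"
  by (simp add: sesq_form_axis_left sum_mult_axis mult.assoc)

lemma quad_form_axis: "quad_form M (axis i t) = cnj t * M $ i $ i * t"
  by (simp add: quad_form_def sesq_form_axis_axis)

lemma quad_form_proj:
  "quad_form (proj v) x = cnj (\<Sum>m\<in>UNIV. cnj (v $ m) * x $ m) * (\<Sum>m\<in>UNIV. cnj (v $ m) * x $ m)"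
  by (simp add: quad_form_def sesq_form_def proj_def sum_product mult_ac sum_distrib_left)
    (rule sum.swap)

lemma hermitian_add: "hermitian A \<Longrightarrow> hermitian B \<Longrightarrow> hermitian (A + B)"
  by (simp add: hermitian_iff_cnj)

lemma hermitian_diff: "hermitian A \<Longrightarrow> hermitian B \<Longrightarrow> hermitian (A - B)"
  by (simp add: hermitian_iff_cnj)

lemma hermitian_scaleR: "hermitian A \<Longrightarrow> hermitian (c *\<^sub>R A)"
  by (simp add: hermitian_iff_cnj scaleR_matrix_nth)

lemma hermitian_proj: "hermitian (proj v)"
  by (simp add: hermitian_iff_cnj proj_def mult.commute)

lemma psd_zero: "psd 0"
  by (simp add: psd_iff_quad_form hermitian_iff_cnj quad_form_def sesq_form_def)

lemma psd_add: "psd A \<Longrightarrow> psd B \<Longrightarrow> psd (A + B)"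
  by (simp add: psd_iff_quad_form hermitian_add quad_form_add)

lemma psd_scaleR: "psd A \<Longrightarrow> 0 \<le> c \<Longrightarrow> psd (c *\<^sub>R A)"
  by (simp add: psd_iff_quad_form hermitian_scaleR quad_form_scaleR)

lemma psd_sum: "finite J \<Longrightarrow> (\<And>j. j \<in> J \<Longrightarrow> psd (A j)) \<Longrightarrow> psd (\<Sum>j\<in>J. A j)"
  by (induction J rule: finite_induct) (auto simp: psd_zero psd_add)

lemma psd_diagonal:
  assumes "psd M"
  shows "M $ i $ i = of_real (Re (M $ i $ i))" and "0 \<le> Re (M $ i $ i)"
proof -
  have "cnj (M $ i $ i) = M $ i $ i"
    using assms by (simp add: psd_iff_quad_form hermitian_iff_cnj)
  then show "M $ i $ i = of_real (Re (M $ i $ i))"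
    by (simp add: complex_eq_iff)
  show "0 \<le> Re (M $ i $ i)"
    using assms quad_form_axis[of M i 1] by (simp add: psd_iff_quad_form) metis
qed

text \<open>Testing with e_j - t cnj(m) e_i, where m = M_ji, gives M_jj - 2 t |m|^2 \<ge> 0 for
  every t > 0.\<close>
lemma psd_zero_diagonal_column:
  assumes psd: "psd M" and zero: "M $ i $ i = 0"
  shows "M $ j $ i = 0"
proof (rule ccontr)
  define m where "m = M $ j $ i"
  assume "M $ j $ i \<noteq> 0"
  define N where "N = (cmod m)\<^sup>2"
  have "j \<noteq> i" and N_pos: "0 < N"
    using zero \<open>M $ j $ i \<noteq> 0\<close> by (auto simp: m_def N_def)
  have mm: "m * cnj m = of_real N"
    unfolding N_def by (rule complex_norm_square[symmetric])
  have Mij: "M $ i $ j = cnj m"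
    using psd by (simp add: psd_iff_quad_form hermitian_iff_cnj m_def)
  define t where "t = (Re (M $ j $ j) + 1) / (2 * N)"
  define s where "s = - of_real t * cnj m"
  have "0 \<le> Re (quad_form M (axis j 1 + axis i s))"
    using psd by (simp add: psd_iff_quad_form)
  also have "quad_form M (axis j 1 + axis i s) = M $ j $ j + m * s + cnj s * cnj m"
    by (simp add: quad_form_add_vector quad_form_axis sesq_form_axis_axis zero Mij m_def)
  also have "\<dots> = M $ j $ j - 2 * of_real t * of_real N"
    by (simp add: s_def algebra_simps flip: mm)
  finally have "0 \<le> Re (M $ j $ j) - 2 * t * N"
    by simp
  moreover have "2 * t * N = Re (M $ j $ j) + 1"
    using N_pos by (simp add: t_def)
  ultimately show False by simp
qed

text \<open>Schur complement step: with a = (M x)_i, the form of M - v v^* at x equals that of M at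
  x - (a / M_ii) e_i.\<close>
lemma psd_minus_proj_column:
  assumes psd: "psd M" and pos: "0 < Re (M $ i $ i)"
  shows "psd (M - proj (\<chi> l. M $ l $ i / of_real (sqrt (Re (M $ i $ i)))))"
    (is "psd (M - proj ?v)")
proof -
  define d where "d = Re (M $ i $ i)"
  have Mii: "M $ i $ i = of_real d"
    using psd_diagonal(1)[OF psd] by (simp add: d_def)
  have herm: "cnj (M $ m $ l) = M $ l $ m" for l m
    using psd by (simp add: psd_iff_quad_form hermitian_iff_cnj)
  have sqrt_d: "of_real (sqrt d) * of_real (sqrt d) = (of_real d :: complex)"
    using pos by (simp add: d_def flip: of_real_mult)
  have "0 \<le> Re (quad_form (M - proj ?v) x)" for x
  proof -
    define a where "a = (\<Sum>m\<in>UNIV. M $ i $ m * x $ m)"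
    define t where "t = - a / of_real d"
    have "(\<Sum>m\<in>UNIV. cnj (?v $ m) * x $ m) = a / of_real (sqrt d)"
      unfolding a_def by (simp add: herm sum_divide_distrib d_def)
    then have proj_x: "quad_form (proj ?v) x = cnj a * a / of_real d"
      unfolding quad_form_proj using sqrt_d by (simp add: field_simps)
    have a_cnj: "(\<Sum>l\<in>UNIV. cnj (x $ l) * M $ l $ i) = cnj a"
      unfolding a_def by (simp add: herm mult.commute)
    have "0 \<le> Re (quad_form M (x + axis i t))"
      using psd by (simp add: psd_iff_quad_form)
    also have "quad_form M (x + axis i t) = quad_form M x + cnj t * of_real d * t + cnj a * t + cnj t * a"
      by (simp add: quad_form_add_vector quad_form_axis sesq_form_axis_left sesq_form_axis_right
          a_cnj Mii a_def[symmetric])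
    also have "\<dots> = quad_form (M - proj ?v) x"
      using pos by (simp add: quad_form_diff proj_x t_def d_def field_simps)
    finally show ?thesis .
  qed
  moreover have "hermitian (M - proj ?v)"
    using psd by (simp add: psd_iff_quad_form hermitian_diff hermitian_proj)
  ultimately show ?thesis
    by (simp add: psd_iff_quad_form)
qed

lemma psd_zero_diagonal_entry:
  assumes "psd M" "M $ l $ l = 0"
  shows "M $ l $ m = 0"
proof -
  have "cnj (M $ m $ l) = M $ l $ m"
    using assms(1) by (simp add: psd_iff_quad_form hermitian_iff_cnj)
  then show ?thesis
    using psd_zero_diagonal_column[OF assms] by simp
qed

text \<open>Induction on the number of nonzero diagonal entries: subtracting the projection built from a
  column with positive diagonal entry keeps M psd, zeroes that entry and keeps the zero ones.\<close>
lemma psd_eq_sum_proj: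
  fixes M :: "'i::finite op"
  assumes "psd M"
  shows "\<exists>k (v :: nat \<Rightarrow> complex^'i). M = (\<Sum>j<k. proj (v j))"
  using assms
proof (induction "card {i. M $ i $ i \<noteq> 0}" arbitrary: M rule: less_induct)
  case less
  show ?case
  proof (cases "\<exists>i. M $ i $ i \<noteq> 0")
    case False
    then have "M = 0"
      using psd_zero_diagonal_entry[OF less.prems] by (auto simp: vec_eq_iff)
    then show ?thesis
      by (intro exI[of _ 0]) simp
  next
    case True
    then obtain i where i: "M $ i $ i \<noteq> 0" by blast
    define d where "d = Re (M $ i $ i)"
    have Mii: "M $ i $ i = of_real d"
      using psd_diagonal(1)[OF less.prems] by (simp add: d_def)
    have "0 \<le> d"
      using psd_diagonal(2)[OF less.prems] by (simp add: d_def)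
    with i Mii have pos: "0 < d"
      by (auto simp: less_le)
    define v where "v = (\<chi> l. M $ l $ i / of_real (sqrt d))"
    define M' where "M' = M - proj v"
    have psd': "psd M'"
      unfolding M'_def v_def using psd_minus_proj_column[OF less.prems] pos
      by (simp add: d_def)
    have "of_real (sqrt d) * of_real (sqrt d) = (of_real d :: complex)"
      using pos by (simp flip: of_real_mult)
    then have "M' $ i $ i = 0"
      unfolding M'_def v_def using pos by (simp add: proj_def Mii field_simps)
    moreover have "M' $ l $ l = 0" if "M $ l $ l = 0" for l
      unfolding M'_def v_def using psd_zero_diagonal_entry[OF less.prems that] that
      by (simp add: proj_def)
    ultimately have "{l. M' $ l $ l \<noteq> 0} \<subseteq> {l. M $ l $ l \<noteq> 0} - {i}"
      by auto
    then have "card {l. M' $ l $ l \<noteq> 0} < card {l. M $ l $ l \<noteq> 0}"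
      using i by (intro psubset_card_mono) auto
    then have "\<exists>k (w :: nat \<Rightarrow> complex^'i). M' = (\<Sum>j<k. proj (w j))"
      by (rule less.hyps[OF _ psd'])
    then obtain k and w :: "nat \<Rightarrow> complex^'i" where w: "M' = (\<Sum>j<k. proj (w j))"
      by blast
    have "M = (\<Sum>j<Suc k. proj ((w(k := v)) j))"
      using w by (simp add: M'_def) (metis diff_add_cancel)
    then show ?thesis by blast
  qed
qed

lemma trace_scaleR: "trace (c *\<^sub>R A) = of_real c * (trace A :: complex)"
  by (simp add: trace_def sum_distrib_left scaleR_matrix_nth del: vector_scaleR_component)

lemma trace_sum: "finite J \<Longrightarrow> trace (\<Sum>j\<in>J. A j) = (\<Sum>j\<in>J. trace (A j :: complex^'n^'n))"
  by (induction J rule: finite_induct) (auto simp: trace_add trace_def sum.distrib)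

lemma sum_cnj_mult_self: "(\<Sum>l\<in>UNIV. cnj (w $ l) * w $ l) = of_real ((norm w)\<^sup>2)"
proof -
  have "(\<Sum>l\<in>UNIV. cnj (w $ l) * w $ l) = (\<Sum>l\<in>UNIV. of_real ((cmod (w $ l))\<^sup>2))"
    by (intro sum.cong refl) (simp only: complex_norm_square mult.commute)
  also have "\<dots> = of_real (\<Sum>l\<in>UNIV. (cmod (w $ l))\<^sup>2)"
    by (rule of_real_sum[symmetric])
  also have "(\<Sum>l\<in>UNIV. (cmod (w $ l))\<^sup>2) = (norm w)\<^sup>2"
    by (simp add: norm_vec_def L2_set_def sum_nonneg)
  finally show ?thesis .
qed

lemma unit_vec_iff_norm: "unit_vec w \<longleftrightarrow> norm w = 1"
  unfolding unit_vec_def sum_cnj_mult_self of_real_eq_1_iff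
  by (smt (verit) norm_ge_zero power2_eq_1_iff)

lemma unit_vec_axis: "unit_vec (axis i 1)"
  by (simp add: unit_vec_def axis_def if_distrib[where f = cnj] if_distrib[where f = "\<lambda>x. x * _"]
      cong: if_cong)

lemma trace_proj: "trace (proj w) = of_real ((norm w)\<^sup>2)"
  unfolding sum_cnj_mult_self[symmetric] by (simp add: trace_def proj_def mult.commute)

lemma proj_scaleR: "proj (c *\<^sub>R w) = (c * c) *\<^sub>R proj w"
  by (simp add: proj_def vec_eq_iff scaleR_matrix_nth scaleR_complex mult_ac)

lemma proj_eq_scaleR_proj_sgn: "proj w = (norm w)\<^sup>2 *\<^sub>R proj (sgn w)"
proof (cases "w = 0")
  case True
  then show ?thesis
    by (simp add: proj_def vec_eq_iff)
next
  case False
  then have "(norm w)\<^sup>2 * (inverse (norm w) * inverse (norm w)) = 1"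
    by (simp add: field_simps power2_eq_square)
  then show ?thesis
    by (simp add: sgn_div_norm divide_inverse_commute proj_scaleR)
qed

definition pure_ensemble :: "nat \<Rightarrow> (nat \<Rightarrow> real) \<Rightarrow> (nat \<Rightarrow> complex^'i) \<Rightarrow> 'i::finite op \<Rightarrow> bool" where
  "pure_ensemble k p \<phi> \<rho> \<longleftrightarrow> (\<forall>i<k. 0 \<le> p i \<and> unit_vec (\<phi> i)) \<and> (\<Sum>i<k. p i) = 1 \<and>
     (\<Sum>i<k. p i *\<^sub>R proj (\<phi> i)) = \<rho>"

lemma ent_formation_pure_ensemble:
  "ent_formation \<rho> =
     Inf {(\<Sum>i<k. p i * vn_entropy (ptrace_A (proj (\<phi> i)))) | k p \<phi>. pure_ensemble k p \<phi> \<rho>}"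
  by (simp add: ent_formation_def pure_ensemble_def)

lemma density_has_pure_ensemble:
  fixes \<rho> :: "'i::finite op"
  assumes "density \<rho>"
  shows "\<exists>k p \<phi>. pure_ensemble k p \<phi> \<rho>"
proof -
  obtain k and v :: "nat \<Rightarrow> complex^'i" where v: "\<rho> = (\<Sum>j<k. proj (v j))"
    using psd_eq_sum_proj assms unfolding density_def by blast
  define p where "p j = (norm (v j))\<^sup>2" for j
  define \<phi> :: "nat \<Rightarrow> complex^'i" where "\<phi> j = (if v j = 0 then axis undefined 1 else sgn (v j))" for j
  have "unit_vec (\<phi> j)" for j
    by (simp add: \<phi>_def unit_vec_axis unit_vec_iff_norm norm_sgn)
  moreover have "p j *\<^sub>R proj (\<phi> j) = proj (v j)" for j
    by (simp add: p_def \<phi>_def proj_eq_scaleR_proj_sgn[of "v j"])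
  moreover have "(\<Sum>j<k. p j) = 1"
  proof -
    have "of_real (\<Sum>j<k. p j) = trace \<rho>"
      unfolding v by (simp add: trace_sum trace_proj p_def)
    then show ?thesis
      using assms by (metis density_def of_real_eq_1_iff)
  qed
  ultimately have "pure_ensemble k p \<phi> \<rho>"
    by (simp add: pure_ensemble_def p_def v)
  then show ?thesis by blast
qed

lemma ent_formation_eqI:
  assumes "density \<rho>"
    and reduced: "\<And>k p \<phi> i. pure_ensemble k p \<phi> \<rho> \<Longrightarrow> i < k \<Longrightarrow> 0 < p i \<Longrightarrow> ptrace_A (proj (\<phi> i)) = \<tau>"
  shows "ent_formation \<rho> = vn_entropy \<tau>"
proof -
  have average: "(\<Sum>i<k. p i * vn_entropy (ptrace_A (proj (\<phi> i)))) = vn_entropy \<tau>"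
    if ens: "pure_ensemble k p \<phi> \<rho>" for k p \<phi>
  proof -
    have "(\<Sum>i<k. p i * vn_entropy (ptrace_A (proj (\<phi> i)))) = (\<Sum>i<k. p i * vn_entropy \<tau>)"
    proof (intro sum.cong refl)
      fix i assume "i \<in> {..<k}"
      then show "p i * vn_entropy (ptrace_A (proj (\<phi> i))) = p i * vn_entropy \<tau>"
        using ens reduced[OF ens] by (cases "p i = 0") (auto simp: pure_ensemble_def less_le)
    qed
    also have "\<dots> = vn_entropy \<tau>"
      using ens by (simp add: pure_ensemble_def flip: sum_distrib_right)
    finally show ?thesis .
  qed
  obtain k p \<phi> where "pure_ensemble k p \<phi> \<rho>"
    using density_has_pure_ensemble[OF assms(1)] by blast
  then have "vn_entropy \<tau> \<in>
      {(\<Sum>i<k. p i * vn_entropy (ptrace_A (proj (\<phi> i)))) | k p \<phi>. pure_ensemble k p \<phi> \<rho>}"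
    by (auto simp flip: average)
  then have "{(\<Sum>i<k. p i * vn_entropy (ptrace_A (proj (\<phi> i)))) | k p \<phi>. pure_ensemble k p \<phi> \<rho>}
      = {vn_entropy \<tau>}"
    using average by blast
  then show ?thesis
    by (simp add: ent_formation_pure_ensemble)
qed

lemma ptrace_A_mult_add: "ptrace_A (K ** (X + Y)) = ptrace_A (K ** X) + ptrace_A (K ** Y)"
  by (simp add: ptrace_A_def matrix_add_ldistrib vec_eq_iff sum.distrib)

lemma ptrace_A_mult_scaleR: "ptrace_A (K ** (c *\<^sub>R X)) = c *\<^sub>R ptrace_A (K ** X)"
  by (simp add: ptrace_A_def vec_eq_iff scaleR_matrix_nth matrix_matrix_mult_def sum_distrib_left
      algebra_simps del: vector_scaleR_component)

lemma ptrace_A_mult_sum: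
  "finite J \<Longrightarrow> ptrace_A (K ** (\<Sum>j\<in>J. c j *\<^sub>R X j)) = (\<Sum>j\<in>J. c j *\<^sub>R ptrace_A (K ** X j))"
  by (induction J rule: finite_induct)
    (simp_all add: ptrace_A_mult_add ptrace_A_mult_scaleR, simp add: ptrace_A_def vec_eq_iff matrix_matrix_mult_def)

definition steered_state :: "'a::finite op \<Rightarrow> complex^('a \<times> 'b::finite) \<Rightarrow> 'b op" where
  "steered_state A \<phi> = (\<chi> b b'. \<Sum>a\<in>UNIV. \<Sum>c\<in>UNIV. A $ a $ c * \<phi> $ (c, b) * cnj (\<phi> $ (a, b')))"

lemma ptrace_A_kron_proj: "ptrace_A (kron A (mat 1) ** proj \<phi>) = steered_state A \<phi>"
proof -
  have "(kron A (mat 1) ** proj \<phi>) $ (a, b) $ (a', b') = (\<Sum>c\<in>UNIV. A $ a $ c * \<phi> $ (c, b) * cnj (\<phi> $ (a', b')))"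
    for a b a' b'
  proof -
    have "(kron A (mat 1) ** proj \<phi>) $ (a, b) $ (a', b') =
        (\<Sum>c\<in>UNIV. \<Sum>d\<in>UNIV. A $ a $ c * (mat 1 :: complex^_^_) $ b $ d * (\<phi> $ (c, d) * cnj (\<phi> $ (a', b'))))"
      by (simp add: matrix_matrix_mult_def kron_def proj_def sum.cartesian_product case_prod_beta
          flip: UNIV_Times_UNIV)
    then show ?thesis
      by (simp add: mat_def mult_ac if_distrib[where f = "\<lambda>x. _ * x"] cong: if_cong)
  qed
  then show ?thesis
    by (simp add: ptrace_A_def steered_state_def vec_eq_iff)
qed

lemma quad_form_steered_state:
  "quad_form (steered_state A \<phi>) x = quad_form A (\<chi> c. \<Sum>b\<in>UNIV. \<phi> $ (c, b) * cnj (x $ b))"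
proof -
  have swap: "(\<Sum>b\<in>UNIV. \<Sum>b'\<in>UNIV. \<Sum>a\<in>UNIV. \<Sum>c\<in>UNIV. f b b' a c) =
      (\<Sum>a\<in>UNIV. \<Sum>c\<in>UNIV. \<Sum>b\<in>UNIV. \<Sum>b'\<in>UNIV. (f b b' a c :: complex))" for f
  proof -
    have "(\<Sum>b\<in>UNIV. \<Sum>b'\<in>UNIV. \<Sum>a\<in>UNIV. \<Sum>c\<in>UNIV. f b b' a c) =
        (\<Sum>b\<in>UNIV. \<Sum>a\<in>UNIV. \<Sum>c\<in>UNIV. \<Sum>b'\<in>UNIV. f b b' a c)"
      by (rule sum.cong[OF refl], subst sum.swap, rule sum.cong[OF refl], subst sum.swap, rule refl)
    also have "\<dots> = (\<Sum>a\<in>UNIV. \<Sum>c\<in>UNIV. \<Sum>b\<in>UNIV. \<Sum>b'\<in>UNIV. f b b' a c)"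
      by (subst sum.swap, rule sum.cong[OF refl], rule sum.swap)
    finally show ?thesis .
  qed
  have "quad_form (steered_state A \<phi>) x = (\<Sum>b\<in>UNIV. \<Sum>b'\<in>UNIV. \<Sum>a\<in>UNIV. \<Sum>c\<in>UNIV.
      cnj (\<phi> $ (a, b')) * x $ b' * A $ a $ c * (\<phi> $ (c, b) * cnj (x $ b)))"
    by (simp add: quad_form_def sesq_form_def steered_state_def sum_distrib_left sum_distrib_right mult_ac)
  also have "\<dots> = (\<Sum>a\<in>UNIV. \<Sum>c\<in>UNIV. \<Sum>b\<in>UNIV. \<Sum>b'\<in>UNIV.
      cnj (\<phi> $ (a, b')) * x $ b' * A $ a $ c * (\<phi> $ (c, b) * cnj (x $ b)))"
    by (rule swap)
  also have "\<dots> = quad_form A (\<chi> c. \<Sum>b\<in>UNIV. \<phi> $ (c, b) * cnj (x $ b))"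
    by (simp add: quad_form_def sesq_form_def sum_distrib_left sum_distrib_right mult_ac)
      (rule sum.cong[OF refl], rule sum.cong[OF refl], rule sum.swap)
  finally show ?thesis .
qed

lemma hermitian_steered_state: "hermitian A \<Longrightarrow> hermitian (steered_state A \<phi>)"
  unfolding hermitian_iff_cnj
proof (intro allI)
  fix i j
  assume A: "\<forall>i j. cnj (A $ j $ i) = A $ i $ j"
  have "cnj (steered_state A \<phi> $ j $ i) = (\<Sum>a\<in>UNIV. \<Sum>c\<in>UNIV. A $ c $ a * \<phi> $ (a, i) * cnj (\<phi> $ (c, j)))"
    using A by (simp add: steered_state_def mult_ac)
  also have "\<dots> = steered_state A \<phi> $ i $ j"
    by (simp add: steered_state_def) (rule sum.swap)
  finally show "cnj (steered_state A \<phi> $ j $ i) = steered_state A \<phi> $ i $ j" .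
qed

lemma psd_steered_state: "psd A \<Longrightarrow> psd (steered_state A \<phi>)"
  by (simp add: psd_iff_quad_form hermitian_steered_state quad_form_steered_state)

lemma steered_state_sum: "finite N \<Longrightarrow> steered_state (\<Sum>n\<in>N. A n) \<phi> = (\<Sum>n\<in>N. steered_state (A n) \<phi>)"
  by (induction N rule: finite_induct)
    (simp_all add: steered_state_def vec_eq_iff algebra_simps sum.distrib)

lemma steered_state_identity: "steered_state (mat 1) \<phi> = ptrace_A (proj \<phi>)"
  by (simp add: steered_state_def ptrace_A_def proj_def vec_eq_iff mat_def
      if_distrib[where f = "\<lambda>x. x * _"] cong: if_cong)

lemma sum_steered_state_povm: "povm M \<Longrightarrow> (\<Sum>n\<in>UNIV. steered_state (M n) \<phi>) = ptrace_A (proj \<phi>)"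
  by (simp add: povm_def flip: steered_state_sum steered_state_identity)

lemma trace_ptrace_A_proj: "trace (ptrace_A (proj \<phi>)) = of_real ((norm \<phi>)\<^sup>2)"
proof -
  have "trace (ptrace_A (proj \<phi>)) = (\<Sum>b\<in>UNIV. \<Sum>a\<in>UNIV. cnj (\<phi> $ (a, b)) * \<phi> $ (a, b))"
    by (simp add: trace_def ptrace_A_def proj_def mult.commute)
  also have "\<dots> = (\<Sum>q\<in>UNIV. cnj (\<phi> $ q) * \<phi> $ q)"
    by (subst sum.swap) (simp add: sum.cartesian_product case_prod_beta flip: UNIV_Times_UNIV)
  finally show ?thesis
    by (simp only: sum_cnj_mult_self)
qed

lemma assemblage_steered:
  assumes "unit_vec \<phi>" "\<And>r. povm (M r)"
  shows "assemblage (\<lambda>n r. steered_state (M r n) \<phi>)"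
  using assms unfolding assemblage_def
  by (auto simp: sum_steered_state_povm trace_ptrace_A_proj unit_vec_iff_norm povm_def
      intro!: psd_steered_state)

lemma marginal_steered:
  assumes "\<And>r. povm (M r)"
  shows "marginal (\<lambda>n r. steered_state (M r n) \<phi>) = ptrace_A (proj \<phi>)"
  by (simp add: marginal_def sum_steered_state_povm assms)

lemma assemblage_convex_sum:
  assumes "finite J" "\<forall>j\<in>J. 0 \<le> w j" "(\<Sum>j\<in>J. w j) = 1" "\<forall>j\<in>J. assemblage (s j)"
  shows "assemblage (\<lambda>n r. \<Sum>j\<in>J. w j *\<^sub>R s j n r)"
proof -
  have swap: "(\<Sum>n\<in>UNIV. \<Sum>j\<in>J. w j *\<^sub>R s j n r) = (\<Sum>j\<in>J. w j *\<^sub>R (\<Sum>n\<in>UNIV. s j n r))" for r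
    by (simp add: scaleR_sum_right) (rule sum.swap)
  have "(\<Sum>n\<in>UNIV. \<Sum>j\<in>J. w j *\<^sub>R s j n r) = (\<Sum>n\<in>UNIV. \<Sum>j\<in>J. w j *\<^sub>R s j n r')" for r r'
    unfolding swap using assms(4) by (intro sum.cong) (auto simp: assemblage_def)
  moreover have "trace (\<Sum>n\<in>UNIV. \<Sum>j\<in>J. w j *\<^sub>R s j n r) = 1" for r
  proof -
    have "trace (\<Sum>n\<in>UNIV. \<Sum>j\<in>J. w j *\<^sub>R s j n r) = of_real (\<Sum>j\<in>J. w j)"
      unfolding swap using assms(1,4) by (simp add: trace_sum trace_scaleR assemblage_def)
    then show ?thesis
      using assms(3) by simp
  qed
  moreover have "psd (\<Sum>j\<in>J. w j *\<^sub>R s j n r)" for n r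
    using assms by (auto simp: assemblage_def intro!: psd_sum psd_scaleR)
  ultimately show ?thesis
    by (simp add: assemblage_def)
qed

text \<open>Splitting off the i-th term writes \<sigma> as a proper convex combination of s i and the
  renormalised average of the others, so extremality forces s i = \<sigma>.\<close>
lemma extremal_assemblage_convex_sum_component:
  assumes ext: "extremal_assemblage \<sigma>" and fin: "finite J" and i: "i \<in> J" "0 < w i"
    and w: "\<forall>j\<in>J. 0 \<le> w j" "(\<Sum>j\<in>J. w j) = 1"
    and s: "\<forall>j\<in>J. assemblage (s j)" and \<sigma>: "\<And>n r. \<sigma> n r = (\<Sum>j\<in>J. w j *\<^sub>R s j n r)"
  shows "s i = \<sigma>"
proof -
  define R where "R = J - {i}"
  have split: "(\<Sum>j\<in>J. f j) = f i + (\<Sum>j\<in>R. f j)" for f :: "_ \<Rightarrow> 'x::comm_monoid_add"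
    unfolding R_def using fin i(1) by (simp add: sum.remove)
  have wR: "(\<Sum>j\<in>R. w j) = 1 - w i" "\<forall>j\<in>R. 0 \<le> w j"
    using split[of w] w by (auto simp: R_def)
  show ?thesis
  proof (cases "w i = 1")
    case True
    then have "\<forall>j\<in>R. w j = 0"
      using wR fin sum_nonneg_eq_0_iff[of R w] by (simp add: R_def)
    then show ?thesis
      using True by (auto simp: fun_eq_iff \<sigma> split)
  next
    case False
    then have wi: "w i < 1"
      using wR fin by (metis R_def diff_ge_0_iff_ge finite_Diff le_less sum_nonneg)
    define \<tau> where "\<tau> = (\<lambda>n r. \<Sum>j\<in>R. (w j / (1 - w i)) *\<^sub>R s j n r)"
    have "assemblage \<tau>"
      unfolding \<tau>_def using fin wR wi s
      by (intro assemblage_convex_sum) (auto simp: R_def simp flip: sum_divide_distrib)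
    moreover have \<sigma>_split: "\<sigma> n r = w i *\<^sub>R s i n r + (1 - w i) *\<^sub>R \<tau> n r" for n r
    proof -
      have "(1 - w i) *\<^sub>R \<tau> n r = (\<Sum>j\<in>R. w j *\<^sub>R s j n r)"
        unfolding \<tau>_def scaleR_sum_right using wi by (intro sum.cong) auto
      then show ?thesis
        by (simp add: \<sigma> split)
    qed
    ultimately have "s i = \<tau>"
      using ext i wi s unfolding extremal_assemblage_def by blast
    then show ?thesis
      using \<sigma>_split by (auto simp: fun_eq_iff algebra_simps)
  qed
qed

lemma extremal_realized_pure_ensemble_reduced_state:
  assumes ext: "extremal_assemblage \<sigma>" and real: "realizes \<rho> \<sigma>"
    and ens: "pure_ensemble k p \<phi> \<rho>" and i: "i < k" "0 < p i"
  shows "ptrace_A (proj (\<phi> i)) = marginal \<sigma>"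
proof -
  obtain M where M: "\<And>r. povm (M r)" and \<sigma>: "\<And>n r. \<sigma> n r = ptrace_A (kron (M r n) (mat 1) ** \<rho>)"
    using real unfolding realizes_def by metis
  define s where "s j = (\<lambda>n r. steered_state (M r n) (\<phi> j))" for j
  have \<rho>: "\<rho> = (\<Sum>j<k. p j *\<^sub>R proj (\<phi> j))"
    using ens by (simp add: pure_ensemble_def)
  have "\<sigma> n r = (\<Sum>j<k. p j *\<^sub>R s j n r)" for n r
    unfolding \<sigma> \<rho> by (simp add: ptrace_A_mult_sum ptrace_A_kron_proj s_def)
  moreover have "\<forall>j\<in>{..<k}. assemblage (s j)"
    using ens M by (auto simp: s_def pure_ensemble_def intro: assemblage_steered)
  ultimately have "s i = \<sigma>"
    using ens i by (intro extremal_assemblage_convex_sum_component[OF ext]) (auto simp: pure_ensemble_def)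
  moreover have "marginal (s i) = ptrace_A (proj (\<phi> i))"
    unfolding s_def using M by (rule marginal_steered)
  ultimately show ?thesis
    by simp
qed

theorem theorem1:
  fixes \<sigma> :: "'n::finite \<Rightarrow> 'r::finite \<Rightarrow> complex^'b::finite^'b"
    and \<rho> :: "complex^('a::finite \<times> 'b)^('a \<times> 'b)"
  assumes "extremal_assemblage \<sigma>"
    and "realizes \<rho> \<sigma>"
  shows "ent_formation \<rho> = vn_entropy (marginal \<sigma>)"
proof (rule ent_formation_eqI)
  show "density \<rho>"
    using assms(2) by (simp add: realizes_def)
  show "ptrace_A (proj (\<phi> i)) = marginal \<sigma>"
    if "pure_ensemble k p \<phi> \<rho>" "i < k" "0 < p i" for k p \<phi> i
    using extremal_realized_pure_ensemble_reduced_state[OF assms that] .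
qed

end
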